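(* Let $d\ge 1$ be an integer and let $n$ be a positive integer that has no prime divisor less than $2^d$. Then $n^{d-1}$ queens can be placed on $\mathbb{Z}_n^d$ without conflict.
   Context: A queen on $\mathbb{Z}_n^d$ can move any number of times by a vector $\mathbf{x}\in\{-1,0,1\}^d\setminus\{\mathbf{0}\}$ (coordinates modulo $n$). Queens occupy distinct fields; two queens at distinct fields $\mathbf{u},\mathbf{v}\in\mathbb{Z}_n^d$ are in conflict if $\mathbf{v}-\mathbf{u}=t\mathbf{x}$ for some $t\in\mathbb{Z}_n$ and some nonzero $\mathbf{x}\in\{-1,0,1\}^d$. A placement is without conflict if no two queens are in conflict. *)

theory Defs
  imports Main "HOL-Number_Theory.Cong"
begin

text \<open>Fields of Z_n^d: integer lists of length d with entries in {0..n-1}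
  (canonical representatives of residues mod n).\<close>
definition fields :: "nat \<Rightarrow> nat \<Rightarrow> int list set" where
  "fields n d = {u. length u = d \<and> (\<forall>i<d. 0 \<le> u ! i \<and> u ! i < int n)}"

definition directions :: "nat \<Rightarrow> int list set" where
  "directions d = {x. length x = d \<and> set x \<subseteq> {-1, 0, 1} \<and> (\<exists>i<d. x ! i \<noteq> 0)}"

definition in_conflict :: "nat \<Rightarrow> nat \<Rightarrow> int list \<Rightarrow> int list \<Rightarrow> bool" where
  "in_conflict n d u v \<longleftrightarrow> u \<noteq> v \<and>
     (\<exists>t::int. \<exists>x\<in>directions d. \<forall>i<d. [v ! i - u ! i = t * x ! i] (mod int n))"

definition conflict_free :: "nat \<Rightarrow> nat \<Rightarrow> int list set \<Rightarrow> bool" where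
  "conflict_free n d Q \<longleftrightarrow> Q \<subseteq> fields n d \<and> (\<forall>u\<in>Q. \<forall>v\<in>Q. \<not> in_conflict n d u v)"

end

theory Submission
  imports Defs
begin

text \<open>The queens are the points u of the hyperplane \<open>\<Sum>i<d. 2^i * u_i = 0\<close> of \<open>\<int>\<^sub>n^d\<close>;
  it has \<open>n^(d-1)\<close> points because the coefficient of \<open>u_0\<close> is 1. If two of them are in
  conflict, \<open>v - u = t x\<close>, applying the linear form gives \<open>t * (\<Sum>i<d. 2^i * x_i) = 0\<close>.
  A signed binary number \<open>\<Sum>i<d. 2^i * x_i\<close> with digits in {-1,0,1}, not all zero, is
  nonzero and smaller than \<open>2^d\<close> in absolute value, so it is a unit mod n; hence
  \<open>t = 0\<close> and \<open>u = v\<close>.\<close>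

lemma abs_sum_signed_binary_le:
  fixes z :: "nat \<Rightarrow> int"
  assumes "\<forall>i<k. \<bar>z i\<bar> \<le> 1"
  shows "\<bar>\<Sum>i<k. 2^i * z i\<bar> \<le> 2^k - 1"
  using assms
proof (induction k)
  case (Suc k)
  have "\<bar>\<Sum>i<Suc k. 2^i * z i\<bar> \<le> \<bar>\<Sum>i<k. 2^i * z i\<bar> + \<bar>2^k * z k\<bar>"
    by (simp add: abs_triangle_ineq)
  also have "\<dots> \<le> (2^k - 1) + 2^k"
    using Suc by (intro add_mono) (auto simp: abs_mult)
  finally show ?case by simp
qed simp

lemma sum_signed_binary_nonzero:
  fixes z :: "nat \<Rightarrow> int"
  assumes "\<forall>i<k. \<bar>z i\<bar> \<le> 1" and "\<exists>i<k. z i \<noteq> 0"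
  shows "(\<Sum>i<k. 2^i * z i) \<noteq> 0"
  using assms
proof (induction k)
  case (Suc k)
  show ?case
  proof (cases "z k = 0")
    case True
    with Suc show ?thesis by (auto simp: less_Suc_eq)
  next
    case False
    with Suc.prems have "\<bar>2^k * z k\<bar> = 2^k"
      by (auto simp: abs_mult)
    moreover have "\<bar>\<Sum>i<k. 2^i * z i\<bar> \<le> 2^k - 1"
      using Suc.prems by (intro abs_sum_signed_binary_le) simp
    ultimately show ?thesis by auto
  qed
qed simp

lemma coprime_if_abs_less_prime_divisors:
  fixes c :: int and n b :: nat
  assumes "c \<noteq> 0" and "\<bar>c\<bar> < int b"
    and "\<forall>p::nat. prime p \<and> p dvd n \<longrightarrow> b \<le> p"
  shows "coprime c (int n)"
proof -
  have "gcd (nat \<bar>c\<bar>) n = 1"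
  proof (rule ccontr)
    assume "gcd (nat \<bar>c\<bar>) n \<noteq> 1"
    then obtain p where p: "prime p" "p dvd gcd (nat \<bar>c\<bar>) n"
      using prime_factor_nat by blast
    then have "p dvd nat \<bar>c\<bar>" and "p dvd n"
      using dvd_trans gcd_dvd1 gcd_dvd2 by blast+
    then have "p \<le> nat \<bar>c\<bar>" and "b \<le> p"
      using assms(1,3) \<open>prime p\<close> by (auto intro: dvd_imp_le)
    then show False
      using assms(2) by linarith
  qed
  then have "coprime (int (nat \<bar>c\<bar>)) (int n)"
    by (simp add: coprime_iff_gcd_eq_1)
  then show ?thesis
    by simp
qed

lemma fields_Suc_Cons_iff:
  "a # y \<in> fields n (Suc m) \<longleftrightarrow> 0 \<le> a \<and> a < int n \<and> y \<in> fields n m"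
  by (auto simp: fields_def nth_Cons' split: if_splits)

lemma card_fields: "card (fields n m) = n ^ m"
proof -
  have "fields n m = {y. set y \<subseteq> {0..<int n} \<and> length y = m}"
    by (force simp: fields_def in_set_conv_nth)
  then show ?thesis by (simp add: card_lists_length_eq)
qed

lemma fields_eq_if_cong:
  assumes "u \<in> fields n d" and "v \<in> fields n d"
    and "\<forall>i<d. [u ! i = v ! i] (mod int n)"
  shows "u = v"
  using assms by (intro nth_equalityI) (auto simp: fields_def cong_def)

lemma sum_nth_Cons:
  "(\<Sum>i<Suc m. c i * (a # y) ! i) = c 0 * a + (\<Sum>i<m. c (Suc i) * y ! i)"
  by (simp only: sum.lessThan_Suc_shift) simp

definition hyperplane :: "nat \<Rightarrow> nat \<Rightarrow> (nat \<Rightarrow> int) \<Rightarrow> int list set" where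
  "hyperplane n d c = {u \<in> fields n d. [\<Sum>i<d. c i * u ! i = 0] (mod int n)}"

lemma hyperplane_conflict_free:
  assumes "\<forall>x\<in>directions d. coprime (\<Sum>i<d. c i * x ! i) (int n)"
  shows "conflict_free n d (hyperplane n d c)"
  unfolding conflict_free_def
proof (intro conjI ballI notI)
  show "hyperplane n d c \<subseteq> fields n d"
    by (auto simp: hyperplane_def)
next
  fix u v assume u: "u \<in> hyperplane n d c" and v: "v \<in> hyperplane n d c"
    and "in_conflict n d u v"
  then obtain t x where "u \<noteq> v" and x: "x \<in> directions d"
    and move: "\<forall>i<d. [v ! i - u ! i = t * x ! i] (mod int n)"
    unfolding in_conflict_def by blast
  have "[t * (\<Sum>i<d. c i * x ! i) = (\<Sum>i<d. c i * v ! i) - (\<Sum>i<d. c i * u ! i)] (mod int n)"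
  proof -
    have "[(\<Sum>i<d. c i * (t * x ! i)) = (\<Sum>i<d. c i * (v ! i - u ! i))] (mod int n)"
      using move by (intro cong_sum cong_mult cong_refl) (auto intro: cong_sym)
    then show ?thesis
      by (simp add: sum_distrib_left sum_subtractf right_diff_distrib mult.left_commute)
  qed
  also have "[(\<Sum>i<d. c i * v ! i) - (\<Sum>i<d. c i * u ! i) = 0 - 0] (mod int n)"
    using u v by (intro cong_diff) (auto simp: hyperplane_def)
  finally have "[t * (\<Sum>i<d. c i * x ! i) = 0 * (\<Sum>i<d. c i * x ! i)] (mod int n)"
    by simp
  then have "[t = 0] (mod int n)"
    using assms x cong_mult_rcancel by blast
  then have "\<forall>i<d. [v ! i - u ! i = 0] (mod int n)"
    using move by (metis cong_scalar_right cong_trans mult_zero_left)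
  then have "\<forall>i<d. [u ! i = v ! i] (mod int n)"
    by (simp add: cong_diff_iff_cong_0 cong_sym)
  with u v have "u = v"
    by (intro fields_eq_if_cong) (auto simp: hyperplane_def)
  with \<open>u \<noteq> v\<close> show False ..
qed

lemma hyperplane_eq_graph:
  assumes "n > 0" and "c 0 = 1"
  shows "hyperplane n (Suc m) c =
    (\<lambda>y. (- (\<Sum>i<m. c (Suc i) * y ! i) mod int n) # y) ` fields n m"
    (is "_ = ?graph ` _")
proof (intro equalityI subsetI)
  fix u assume u: "u \<in> hyperplane n (Suc m) c"
  then obtain a y where [simp]: "u = a # y"
    by (cases u) (auto simp: hyperplane_def fields_def)
  from u have a: "0 \<le> a" "a < int n" and y: "y \<in> fields n m"
    and "[a + (\<Sum>i<m. c (Suc i) * y ! i) = 0] (mod int n)"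
    by (simp_all add: hyperplane_def fields_Suc_Cons_iff sum_nth_Cons assms(2) del: sum.lessThan_Suc)
  then have "[a = - (\<Sum>i<m. c (Suc i) * y ! i)] (mod int n)"
    by (simp add: cong_iff_dvd_diff)
  with a have "a = - (\<Sum>i<m. c (Suc i) * y ! i) mod int n"
    by (simp add: cong_def)
  with y show "u \<in> ?graph ` fields n m" by simp
next
  fix u assume "u \<in> ?graph ` fields n m"
  then obtain y where y: "y \<in> fields n m" and [simp]: "u = ?graph y" by blast
  have "[- (\<Sum>i<m. c (Suc i) * y ! i) mod int n + (\<Sum>i<m. c (Suc i) * y ! i)
        = - (\<Sum>i<m. c (Suc i) * y ! i) + (\<Sum>i<m. c (Suc i) * y ! i)] (mod int n)"
    by (intro cong_add cong_refl) (simp add: cong_def)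
  with y assms show "u \<in> hyperplane n (Suc m) c"
    by (simp add: hyperplane_def fields_Suc_Cons_iff sum_nth_Cons del: sum.lessThan_Suc)
qed

lemma card_hyperplane:
  assumes "n > 0" and "c 0 = 1"
  shows "card (hyperplane n (Suc m) c) = n ^ m"
  unfolding hyperplane_eq_graph[where n = n and c = c and m = m, OF assms]
  by (subst card_image) (auto intro: inj_onI simp: card_fields)

lemma signed_binary_coprime:
  assumes "\<forall>p::nat. prime p \<and> p dvd n \<longrightarrow> 2 ^ d \<le> p" and "x \<in> directions d"
  shows "coprime (\<Sum>i<d. 2^i * x ! i) (int n)"
proof (rule coprime_if_abs_less_prime_divisors)
  from \<open>x \<in> directions d\<close> have digits: "\<forall>i<d. \<bar>x ! i\<bar> \<le> 1" and "\<exists>i<d. x ! i \<noteq> 0"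
    unfolding directions_def by (force dest!: nth_mem)+
  then show "(\<Sum>i<d. 2^i * x ! i) \<noteq> 0"
    by (rule sum_signed_binary_nonzero)
  from digits show "\<bar>\<Sum>i<d. 2^i * x ! i\<bar> < int (2 ^ d)"
    using abs_sum_signed_binary_le by fastforce
qed (use assms in simp)

theorem mainTheorem7:
  fixes n d :: nat
  assumes "d \<ge> 1" and "n > 0"
    and "\<forall>p::nat. prime p \<and> p dvd n \<longrightarrow> p \<ge> 2 ^ d"
  shows "\<exists>Q. conflict_free n d Q \<and> card Q = n ^ (d - 1)"
proof
  obtain m where d: "d = Suc m"
    using assms(1) by (cases d) auto
  let ?Q = "hyperplane n d (\<lambda>i. 2 ^ i)"
  have "conflict_free n d ?Q"
    using assms(3) by (intro hyperplane_conflict_free ballI signed_binary_coprime) auto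
  moreover have "card ?Q = n ^ (d - 1)"
    using card_hyperplane[OF assms(2)] d by simp
  ultimately show "conflict_free n d ?Q \<and> card ?Q = n ^ (d - 1)" ..
qed

end
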